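(* Let $A(x_1,x_2)=\begin{bmatrix}sx_1 & x_2\\ mx_1+nx_2 & -sx_1\end{bmatrix}$, $P(x_1,x_2,x_3,x_4)=\begin{bmatrix}tA(x_1,x_2) & A(x_3,x_4)\\ pA(x_1,x_2)+qA(x_3,x_4) & -tA(x_1,x_2)\end{bmatrix}$, and $f=\det P$, with $(m,n,p,q,s,t)=(-1,-4,1,-1,1,1)$. Then the quartic diophantine equation $f(x_1,x_2,x_3,x_4)=1$ has infinitely many solutions in positive integers (one of them being $(21,8,33,13)$). *)

theory Defs
  imports "HOL-Analysis.Analysis" "HOL-Library.Numeral_Type"
begin

definition pm :: int where "pm = -1"
definition pn :: int where "pn = -4"
definition pp :: int where "pp = 1"
definition pq :: int where "pq = -1"
definition ps :: int where "ps = 1"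
definition pt :: int where "pt = 1"

definition Amat :: "int \<Rightarrow> int \<Rightarrow> int^2^2" where
  "Amat x1 x2 = (\<chi> i j.
     if i = 0 then (if j = 0 then ps * x1 else x2)
     else (if j = 0 then pm * x1 + pn * x2 else - ps * x1))"

definition smul2 :: "int \<Rightarrow> int^2^2 \<Rightarrow> int^2^2" where
  "smul2 c B = (\<chi> i j. c * B $ i $ j)"

text \<open>The 4x4 block matrix
  P = [[t A(x1,x2), A(x3,x4)], [p A(x1,x2) + q A(x3,x4), - t A(x1,x2)]].
  Index k of type 4 (k = 0,1,2,3): block k div 2, position within block k mod 2.\<close>
definition blk :: "4 \<Rightarrow> 2" where "blk k = (if k = 0 \<or> k = 1 then 0 else 1)"
definition inn :: "4 \<Rightarrow> 2" where "inn k = (if k = 0 \<or> k = 2 then 0 else 1)"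

definition Pblock :: "int \<Rightarrow> int \<Rightarrow> int \<Rightarrow> int \<Rightarrow> 2 \<Rightarrow> 2 \<Rightarrow> int^2^2" where
  "Pblock x1 x2 x3 x4 a b =
     (if a = 0 then (if b = 0 then smul2 pt (Amat x1 x2) else Amat x3 x4)
      else (if b = 0 then smul2 pp (Amat x1 x2) + smul2 pq (Amat x3 x4)
            else smul2 (- pt) (Amat x1 x2)))"

definition Pmat :: "int \<Rightarrow> int \<Rightarrow> int \<Rightarrow> int \<Rightarrow> int^4^4" where
  "Pmat x1 x2 x3 x4 = (\<chi> i j. Pblock x1 x2 x3 x4 (blk i) (blk j) $ inn i $ inn j)"

definition f :: "int \<Rightarrow> int \<Rightarrow> int \<Rightarrow> int \<Rightarrow> int" where
  "f x1 x2 x3 x4 = det (Pmat x1 x2 x3 x4)"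

end

theory Submission
  imports Defs "HOL-Number_Theory.Fib"
begin

text \<open>If \<open>(x\<^sub>3,x\<^sub>4)\<close> is proportional to \<open>(x\<^sub>1,x\<^sub>2)\<close>, say \<open>(x\<^sub>1,x\<^sub>2,x\<^sub>3,x\<^sub>4) =
  (a u, a v, b u, b v)\<close>, then \<open>P\<close> is the Kronecker product of the \<open>2 \<times> 2\<close> scalar matrix
  \<open>K = [[t a, b], [p a + q b, -t a]]\<close> with \<open>A(u,v)\<close>, so
  \<open>f = det K\<^sup>2 det A(u,v)\<^sup>2 = (a\<^sup>2 + a b - b\<^sup>2)\<^sup>2 (u\<^sup>2 - u v - 4 v\<^sup>2)\<^sup>2\<close>.
  The second factor is \<open>1\<close> at \<open>(u,v) = (5,2)\<close>, and the first is \<open>1\<close> for consecutive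
  Fibonacci numbers \<open>a, b\<close> by Cassini's identity.\<close>

lemma det_4:
  "det (A::'a::comm_ring_1^4^4) = A $ 1 $ 1 * (A $ 2 $ 2 * (A $ 3 $ 3 * A $ 4 $ 4)) -
     A $ 1 $ 1 * (A $ 2 $ 2 * (A $ 3 $ 4 * A $ 4 $ 3)) +
     (A $ 1 $ 1 * (A $ 2 $ 3 * (A $ 3 $ 4 * A $ 4 $ 2)) -
      A $ 1 $ 1 * (A $ 2 $ 3 * (A $ 3 $ 2 * A $ 4 $ 4)) +
      (A $ 1 $ 1 * (A $ 2 $ 4 * (A $ 3 $ 2 * A $ 4 $ 3)) -
       A $ 1 $ 1 * (A $ 2 $ 4 * (A $ 3 $ 3 * A $ 4 $ 2)))) +
     (A $ 1 $ 2 * (A $ 2 $ 1 * (A $ 3 $ 4 * A $ 4 $ 3)) -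
      A $ 1 $ 2 * (A $ 2 $ 1 * (A $ 3 $ 3 * A $ 4 $ 4)) +
      (A $ 1 $ 2 * (A $ 2 $ 3 * (A $ 3 $ 1 * A $ 4 $ 4)) -
       A $ 1 $ 2 * (A $ 2 $ 3 * (A $ 3 $ 4 * A $ 4 $ 1)) +
       (A $ 1 $ 2 * (A $ 2 $ 4 * (A $ 3 $ 3 * A $ 4 $ 1)) -
        A $ 1 $ 2 * (A $ 2 $ 4 * (A $ 3 $ 1 * A $ 4 $ 3)))) +
      (A $ 1 $ 3 * (A $ 2 $ 2 * (A $ 3 $ 4 * A $ 4 $ 1)) -
       A $ 1 $ 3 * (A $ 2 $ 2 * (A $ 3 $ 1 * A $ 4 $ 4)) +
       (A $ 1 $ 3 * (A $ 2 $ 1 * (A $ 3 $ 2 * A $ 4 $ 4)) -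
        A $ 1 $ 3 * (A $ 2 $ 1 * (A $ 3 $ 4 * A $ 4 $ 2)) +
        (A $ 1 $ 3 * (A $ 2 $ 4 * (A $ 3 $ 1 * A $ 4 $ 2)) -
         A $ 1 $ 3 * (A $ 2 $ 4 * (A $ 3 $ 2 * A $ 4 $ 1)))) +
       (A $ 1 $ 4 * (A $ 2 $ 2 * (A $ 3 $ 1 * A $ 4 $ 3)) -
        A $ 1 $ 4 * (A $ 2 $ 2 * (A $ 3 $ 3 * A $ 4 $ 1)) +
        (A $ 1 $ 4 * (A $ 2 $ 3 * (A $ 3 $ 2 * A $ 4 $ 1)) -
         A $ 1 $ 4 * (A $ 2 $ 3 * (A $ 3 $ 1 * A $ 4 $ 2)) +
         (A $ 1 $ 4 * (A $ 2 $ 1 * (A $ 3 $ 3 * A $ 4 $ 2)) -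
          A $ 1 $ 4 * (A $ 2 $ 1 * (A $ 3 $ 2 * A $ 4 $ 3)))))))"
proof -
  have f1: "finite {2::4, 3, 4}" "1 \<notin> {2::4, 3, 4}" by auto
  have f2: "finite {3::4, 4}" "2 \<notin> {3::4, 4}" by auto
  have f3: "finite {4::4}" "3 \<notin> {4::4}" by auto
  show ?thesis
    unfolding det_def UNIV_4 sum_over_permutations_insert[OF f1]
      sum_over_permutations_insert[OF f2] sum_over_permutations_insert[OF f3] permutes_sing
    by (simp add: sign_swap_id permutation_swap_id permutation_compose sign_compose sign_id swap_id_eq)
qed

definition kronecker_2 :: "'a::times^2^2 \<Rightarrow> 'a^2^2 \<Rightarrow> 'a^4^4" where
  "kronecker_2 K M = (\<chi> i j. K $ blk i $ blk j * M $ inn i $ inn j)"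

lemma det_kronecker_2:
  fixes K M :: "'a::comm_ring_1^2^2"
  shows "det (kronecker_2 K M) = det K ^ 2 * det M ^ 2"
proof -
  have two: "(2::2) = 0" \<comment> \<open>\<open>det_2\<close> indexes by \<open>1, 2\<close>, while \<open>blk\<close> and \<open>inn\<close> use \<open>0, 1\<close>\<close>
    by simp
  show ?thesis
    unfolding det_4 det_2 kronecker_2_def
    by (simp add: blk_def inn_def two power2_eq_square algebra_simps)
qed

definition Pcoeff :: "int \<Rightarrow> int \<Rightarrow> int^2^2" where
  "Pcoeff a b = (\<chi> i j.
     if i = 0 then (if j = 0 then pt * a else b)
     else (if j = 0 then pp * a + pq * b else - pt * a))"

lemma Pmat_scaled:
  "Pmat (x1 * a) (x2 * a) (x1 * b) (x2 * b) = kronecker_2 (Pcoeff a b) (Amat x1 x2)"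
  by (simp add: vec_eq_iff Pmat_def kronecker_2_def Pblock_def Pcoeff_def smul2_def Amat_def
      blk_def inn_def algebra_simps)

lemma f_scaled:
  "f (x1 * a) (x2 * a) (x1 * b) (x2 * b) = (a^2 + a * b - b^2)^2 * (x1^2 - x1 * x2 - 4 * x2^2)^2"
proof -
  have two: "(2::2) = 0" by simp
  have det_Pcoeff: "det (Pcoeff a b) = - (a^2 + a * b - b^2)"
    and det_Amat: "det (Amat x1 x2) = - (x1^2 - x1 * x2 - 4 * x2^2)"
    by (simp_all add: two det_2 Pcoeff_def Amat_def pm_def pn_def pp_def pq_def ps_def pt_def
        power2_eq_square algebra_simps)
  show ?thesis
    by (simp only: f_def Pmat_scaled det_kronecker_2 det_Pcoeff det_Amat power2_minus)
qed

lemma fib_Cassini_squared: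
  "(int (fib n)^2 + int (fib n) * int (fib (Suc n)) - int (fib (Suc n))^2)^2 = 1"
proof -
  have "int (fib n)^2 + int (fib n) * int (fib (Suc n)) - int (fib (Suc n))^2 = - ((-1)^n)"
    using fib_Cassini_int[of n] by (simp add: power2_eq_square algebra_simps)
  then show ?thesis
    by (simp add: power2_eq_square flip: power_add)
qed

lemma strict_mono_fib_Suc_Suc: "strict_mono (\<lambda>n. fib (Suc (Suc n)))"
  by (rule strict_monoI_Suc) (simp add: fib_neq_0_nat)

theorem mainTheorem13:
  shows "infinite ({(x1, x2, x3, x4).
            x1 > 0 \<and> x2 > 0 \<and> x3 > 0 \<and> x4 > 0 \<and> f x1 x2 x3 x4 = 1} :: (int \<times> int \<times> int \<times> int) set)
         \<and> f 21 8 33 13 = 1" (is "infinite ?S \<and> _")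
proof
  define a b where "a n = int (fib (Suc n))" and "b n = int (fib (Suc (Suc n)))" for n
  let ?sol = "\<lambda>n. (5 * a n, 2 * a n, 5 * b n, 2 * b n)"
  have "inj ?sol"
  proof (rule injI)
    fix m n
    assume "?sol m = ?sol n"
    then have "fib (Suc (Suc m)) = fib (Suc (Suc n))"
      by (simp add: b_def del: fib.simps)
    then show "m = n"
      using strict_mono_eq[OF strict_mono_fib_Suc_Suc] by blast
  qed
  moreover have "range ?sol \<subseteq> ?S"
  proof clarify
    fix n
    have "a n > 0" "b n > 0"
      by (simp_all add: a_def b_def fib_neq_0_nat del: fib.simps)
    moreover have "f (5 * a n) (2 * a n) (5 * b n) (2 * b n) = 1"
      using f_scaled[of 5 "a n" 2 "b n"] fib_Cassini_squared[of "Suc n"]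
      by (simp add: a_def b_def del: fib.simps)
    ultimately show "0 < 5 * a n \<and> 0 < 2 * a n \<and> 0 < 5 * b n \<and> 0 < 2 * b n \<and>
        f (5 * a n) (2 * a n) (5 * b n) (2 * b n) = 1"
      by simp
  qed
  ultimately show "infinite ?S"
    using range_inj_infinite infinite_super by blast
  show "f 21 8 33 13 = 1"
    unfolding f_def det_4
    by (simp add: Pmat_def blk_def inn_def Pblock_def smul2_def Amat_def pm_def pn_def pp_def pq_def ps_def pt_def)
qed

end
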